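(* Let $\Gamma$ be a finite dynamic game with ordinal preferences and perfect recall, let $R\subseteq S$ be a restriction and $i\in I$. Then $$\mathbb U_i(R)=\bigcup_{u_i\in\mathcal U_i}\mathbb M_i(R)[u_i].$$
   Context: A finite dynamic game with ordinal preferences and perfect recall $\Gamma$ consists of: a finite set of players $I$; a finite rooted tree of histories (finite sequences of action profiles, simultaneous moves allowed) with terminal histories $Z$; for each $i$ a partition $H_i$ of the non-terminal histories where $i$ is active (at least two actions) into information sets with identical available actions; perfect recall; complete transitive preferences $\succsim_i$ on $Z$ (asymmetric part $\succ_i$). Strategies of $i$ are equivalence classes of behaviorally equivalent standard strategies (action assignments to $H_i$, identified when they allow the same information sets and prescribe the same actions there); $S_i$ is the finite set of strategies, $S=\prod_jS_j$, $S_{-i}=\prod_{j\ne i}S_j$, $\zeta:S\to Z$ the outcome map. For $h\in H_i$, $S_i(h)$, $S_{-i}(h)$ are strategies of $i$, resp. profiles of others, reaching $h$; $H_i(s_i)=\{h\in H_i:s_i\in S_i(h)\}$. A restriction is a nonempty $R=\prod_jR_j\subseteq S$; $R_i(h)=R_i\cap S_i(h)$, $R_{-i}(h)=R_{-i}\cap S_{-i}(h)$, $R^i(h)=R_i(h)\times R_{-i}(h)$. For $P=P_i\times P_{-i}$ ($P_{-i}\subseteq S_{-i}$ not necessarily a product), $s_i\in P_i$ is weakly dominated relative to $P$ by $t_i\in P_i$ if $\zeta(t_i,s_{-i})\succsim_i\zeta(s_i,s_{-i})$ for all $s_{-i}\in P_{-i}$ with $\succ_i$ for some; B-dominated w.r.t.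 $P$ if for every nonempty $Q_{-i}\subseteq P_{-i}$ it is weakly dominated relative to $P_i\times Q_{-i}$ by some strategy in $P_i$. $s_i\in R_i$ is conditionally B-dominated w.r.t. $R$ if some $h\in H_i(s_i)$ has $R^i(h)\ne\emptyset$ and $s_i$ B-dominated w.r.t. $R^i(h)$. $\mathbb U_i(R)$ is the set of $s_i\in R_i$ not conditionally B-dominated w.r.t. $R$. $\mathcal U_i$ is the set of $u_i:Z\to\mathbb R$ with $u_i(z)\ge u_i(z')\iff z\succsim_iz'$. Given $u_i$, $s_i\in P_i$ is strictly dominated relative to $P=P_i\times P_{-i}$ by a mixed strategy if there is a probability distribution $\sigma$ on $P_i$ with $\sum_{t_i\in P_i}\sigma(t_i)u_i(\zeta(t_i,s_{-i}))>u_i(\zeta(s_i,s_{-i}))$ for every $s_{-i}\in P_{-i}$. $\mathbb M_i(R)[u_i]$ is the set of $s_i\in R_i$ such that for every $h\in H_i(s_i)$ with $R^i(h)\ne\emptyset$, $s_i$ is not strictly dominated relative to $R^i(h)$ by a mixed strategy given $u_i$. *)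

theory Defs
  imports Complex_Main "HOL-Library.FuncSet"
begin

text \<open>A history is a finite list of action profiles
(functions assigning an action to every player); at each non-terminal history
every player has a nonempty set of feasible actions and the feasible action
profiles are exactly the product of these sets.\<close>

type_synonym ('i, 'a) hist = "('i \<Rightarrow> 'a) list"

record ('i, 'a) game =
  hists :: "('i, 'a) hist set"
  infos :: "'i \<Rightarrow> ('i, 'a) hist set set"
  pref  :: "'i \<Rightarrow> ('i, 'a) hist \<Rightarrow> ('i, 'a) hist \<Rightarrow> bool"

definition succs :: "('i, 'a, 'b) game_scheme \<Rightarrow> ('i, 'a) hist \<Rightarrow> ('i \<Rightarrow> 'a) set" where
  "succs G h = {a. h @ [a] \<in> hists G}"

definition terminals :: "('i, 'a, 'b) game_scheme \<Rightarrow> ('i, 'a) hist set" where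
  "terminals G = {h \<in> hists G. succs G h = {}}"

definition avail :: "('i, 'a, 'b) game_scheme \<Rightarrow> ('i, 'a) hist \<Rightarrow> 'i \<Rightarrow> 'a set" where
  "avail G h i = (\<lambda>a. a i) ` succs G h"

definition active :: "('i, 'a, 'b) game_scheme \<Rightarrow> 'i \<Rightarrow> ('i, 'a) hist \<Rightarrow> bool" where
  "active G i h \<longleftrightarrow> h \<in> hists G \<and> h \<notin> terminals G \<and> card (avail G h i) \<ge> 2"

definition info_of :: "('i, 'a, 'b) game_scheme \<Rightarrow> 'i \<Rightarrow> ('i, 'a) hist \<Rightarrow> ('i, 'a) hist set" where
  "info_of G i h = (THE I. I \<in> infos G i \<and> h \<in> I)"

definition experience :: "('i, 'a, 'b) game_scheme \<Rightarrow> 'i \<Rightarrow> ('i, 'a) hist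
    \<Rightarrow> (('i, 'a) hist set \<times> 'a) list" where
  "experience G i h = [(info_of G i (take k h), (h ! k) i). k \<leftarrow> [0..<length h], active G i (take k h)]"

definition tree_ok :: "('i, 'a, 'b) game_scheme \<Rightarrow> bool" where
  "tree_ok G \<longleftrightarrow> finite (hists G) \<and> [] \<in> hists G
     \<and> (\<forall>h h'. h @ h' \<in> hists G \<longrightarrow> h \<in> hists G)
     \<and> (\<forall>h \<in> hists G. succs G h \<noteq> {} \<longrightarrow> (\<forall>a. a \<in> succs G h \<longleftrightarrow> (\<forall>i. a i \<in> avail G h i)))"

definition infos_ok :: "('i, 'a, 'b) game_scheme \<Rightarrow> bool" where
  "infos_ok G \<longleftrightarrow> (\<forall>i.
       (\<forall>I \<in> infos G i. I \<noteq> {})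
     \<and> (\<forall>I \<in> infos G i. \<forall>J \<in> infos G i. I \<noteq> J \<longrightarrow> I \<inter> J = {})
     \<and> \<Union> (infos G i) = {h. active G i h}
     \<and> (\<forall>I \<in> infos G i. \<forall>h \<in> I. \<forall>h' \<in> I. avail G h i = avail G h' i))"

definition perfect_recall :: "('i, 'a, 'b) game_scheme \<Rightarrow> bool" where
  "perfect_recall G \<longleftrightarrow> (\<forall>i. \<forall>I \<in> infos G i. \<forall>h \<in> I. \<forall>h' \<in> I. experience G i h = experience G i h')"

definition prefs_ok :: "('i, 'a, 'b) game_scheme \<Rightarrow> bool" where
  "prefs_ok G \<longleftrightarrow> (\<forall>i.
       (\<forall>z \<in> terminals G. \<forall>z' \<in> terminals G. pref G i z z' \<or> pref G i z' z)
     \<and> (\<forall>z \<in> terminals G. \<forall>z' \<in> terminals G. \<forall>z'' \<in> terminals G.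
           pref G i z z' \<longrightarrow> pref G i z' z'' \<longrightarrow> pref G i z z''))"

definition finite_game :: "('i::finite, 'a, 'b) game_scheme \<Rightarrow> bool" where
  "finite_game G \<longleftrightarrow> tree_ok G \<and> infos_ok G \<and> perfect_recall G \<and> prefs_ok G"

definition spref :: "('i, 'a, 'b) game_scheme \<Rightarrow> 'i \<Rightarrow> ('i, 'a) hist \<Rightarrow> ('i, 'a) hist \<Rightarrow> bool" where
  "spref G i z z' \<longleftrightarrow> pref G i z z' \<and> \<not> pref G i z' z"

text \<open>A strategy (equivalence class of behaviourally equivalent standard strategies)
is represented by its canonical reduced form: a partial map defined exactly on the
information sets the strategy allows, giving the prescribed action there.\<close>
type_synonym ('i, 'a) strat = "('i, 'a) hist set \<Rightarrow> 'a option"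

definition consistent :: "('i, 'a, 'b) game_scheme \<Rightarrow> 'i \<Rightarrow> ('i, 'a) strat \<Rightarrow> ('i, 'a) hist \<Rightarrow> bool" where
  "consistent G i f h \<longleftrightarrow> (\<forall>k < length h. active G i (take k h) \<longrightarrow> f (info_of G i (take k h)) = Some ((h ! k) i))"

definition std_strats :: "('i, 'a, 'b) game_scheme \<Rightarrow> 'i \<Rightarrow> (('i, 'a) hist set \<Rightarrow> 'a) set" where
  "std_strats G i = {s. \<forall>I \<in> infos G i. \<forall>h \<in> I. s I \<in> avail G h i}"

definition allows :: "('i, 'a, 'b) game_scheme \<Rightarrow> 'i \<Rightarrow> (('i, 'a) hist set \<Rightarrow> 'a) \<Rightarrow> ('i, 'a) hist set \<Rightarrow> bool" where
  "allows G i s I \<longleftrightarrow> (\<exists>h \<in> I. consistent G i (Some \<circ> s) h)"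

definition reduce :: "('i, 'a, 'b) game_scheme \<Rightarrow> 'i \<Rightarrow> (('i, 'a) hist set \<Rightarrow> 'a) \<Rightarrow> ('i, 'a) strat" where
  "reduce G i s = (\<lambda>I. if I \<in> infos G i \<and> allows G i s I then Some (s I) else None)"

definition strats :: "('i, 'a, 'b) game_scheme \<Rightarrow> 'i \<Rightarrow> ('i, 'a) strat set" where
  "strats G i = reduce G i ` std_strats G i"

definition outcome :: "('i, 'a, 'b) game_scheme \<Rightarrow> ('i \<Rightarrow> ('i, 'a) strat) \<Rightarrow> ('i, 'a) hist" where
  "outcome G s = (THE z. z \<in> terminals G \<and> (\<forall>j. consistent G j (s j) z))"

text \<open>Profiles of the opponents of i are functions on UNIV - {i} (undefined at i);
(t_i, s_{-i}) is s_{-i}(i := t_i).\<close>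
definition others :: "'i \<Rightarrow> ('i \<Rightarrow> ('i, 'a) strat set) \<Rightarrow> ('i \<Rightarrow> ('i, 'a) strat) set" where
  "others i R = PiE (UNIV - {i}) R"

definition join :: "'i \<Rightarrow> ('i, 'a) strat \<Rightarrow> ('i \<Rightarrow> ('i, 'a) strat) \<Rightarrow> ('i \<Rightarrow> ('i, 'a) strat)" where
  "join i t so = so(i := t)"

definition restriction :: "('i, 'a, 'b) game_scheme \<Rightarrow> ('i \<Rightarrow> ('i, 'a) strat set) \<Rightarrow> bool" where
  "restriction G R \<longleftrightarrow> (\<forall>j. R j \<subseteq> strats G j \<and> R j \<noteq> {})"

text \<open>R_i(h) and R_{-i}(h) for an information set h of i (reaching h = reaching some history in h).\<close>
definition own_at :: "('i, 'a, 'b) game_scheme \<Rightarrow> ('i \<Rightarrow> ('i, 'a) strat set) \<Rightarrow> 'i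
    \<Rightarrow> ('i, 'a) hist set \<Rightarrow> ('i, 'a) strat set" where
  "own_at G R i I = {t \<in> R i. \<exists>h \<in> I. consistent G i t h}"

definition others_at :: "('i, 'a, 'b) game_scheme \<Rightarrow> ('i \<Rightarrow> ('i, 'a) strat set) \<Rightarrow> 'i
    \<Rightarrow> ('i, 'a) hist set \<Rightarrow> ('i \<Rightarrow> ('i, 'a) strat) set" where
  "others_at G R i I = {so \<in> others i R. \<exists>h \<in> I. \<forall>j. j \<noteq> i \<longrightarrow> consistent G j (so j) h}"

definition reaches_info :: "('i, 'a, 'b) game_scheme \<Rightarrow> 'i \<Rightarrow> ('i, 'a) strat \<Rightarrow> ('i, 'a) hist set \<Rightarrow> bool" where
  "reaches_info G i s I \<longleftrightarrow> I \<in> infos G i \<and> s \<in> strats G i \<and> (\<exists>h \<in> I. consistent G i s h)"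

definition weakly_dom :: "('i, 'a, 'b) game_scheme \<Rightarrow> 'i \<Rightarrow> ('i, 'a) strat set
    \<Rightarrow> ('i \<Rightarrow> ('i, 'a) strat) set \<Rightarrow> ('i, 'a) strat \<Rightarrow> ('i, 'a) strat \<Rightarrow> bool" where
  "weakly_dom G i Ps Po s t \<longleftrightarrow> s \<in> Ps \<and> t \<in> Ps
     \<and> (\<forall>so \<in> Po. pref G i (outcome G (join i t so)) (outcome G (join i s so)))
     \<and> (\<exists>so \<in> Po. spref G i (outcome G (join i t so)) (outcome G (join i s so)))"

definition B_dom :: "('i, 'a, 'b) game_scheme \<Rightarrow> 'i \<Rightarrow> ('i, 'a) strat set
    \<Rightarrow> ('i \<Rightarrow> ('i, 'a) strat) set \<Rightarrow> ('i, 'a) strat \<Rightarrow> bool" where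
  "B_dom G i Ps Po s \<longleftrightarrow> s \<in> Ps \<and> (\<forall>Q. Q \<subseteq> Po \<and> Q \<noteq> {} \<longrightarrow> (\<exists>t \<in> Ps. weakly_dom G i Ps Q s t))"

definition cond_B_dom :: "('i, 'a, 'b) game_scheme \<Rightarrow> ('i \<Rightarrow> ('i, 'a) strat set) \<Rightarrow> 'i
    \<Rightarrow> ('i, 'a) strat \<Rightarrow> bool" where
  "cond_B_dom G R i s \<longleftrightarrow> (\<exists>I. reaches_info G i s I \<and> own_at G R i I \<noteq> {} \<and> others_at G R i I \<noteq> {}
       \<and> B_dom G i (own_at G R i I) (others_at G R i I) s)"

definition UU :: "('i, 'a, 'b) game_scheme \<Rightarrow> ('i \<Rightarrow> ('i, 'a) strat set) \<Rightarrow> 'i \<Rightarrow> ('i, 'a) strat set" where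
  "UU G R i = {s \<in> R i. \<not> cond_B_dom G R i s}"

definition util_reps :: "('i, 'a, 'b) game_scheme \<Rightarrow> 'i \<Rightarrow> (('i, 'a) hist \<Rightarrow> real) set" where
  "util_reps G i = {u. \<forall>z \<in> terminals G. \<forall>z' \<in> terminals G. u z \<ge> u z' \<longleftrightarrow> pref G i z z'}"

definition strictly_dom_mixed :: "('i, 'a, 'b) game_scheme \<Rightarrow> 'i \<Rightarrow> (('i, 'a) hist \<Rightarrow> real)
    \<Rightarrow> ('i, 'a) strat set \<Rightarrow> ('i \<Rightarrow> ('i, 'a) strat) set \<Rightarrow> ('i, 'a) strat \<Rightarrow> bool" where
  "strictly_dom_mixed G i u Ps Po s \<longleftrightarrow> (\<exists>\<sigma> :: ('i, 'a) strat \<Rightarrow> real.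
       (\<forall>t \<in> Ps. \<sigma> t \<ge> 0) \<and> (\<Sum>t \<in> Ps. \<sigma> t) = 1
     \<and> (\<forall>so \<in> Po. (\<Sum>t \<in> Ps. \<sigma> t * u (outcome G (join i t so))) > u (outcome G (join i s so))))"

definition MM :: "('i, 'a, 'b) game_scheme \<Rightarrow> ('i \<Rightarrow> ('i, 'a) strat set) \<Rightarrow> 'i
    \<Rightarrow> (('i, 'a) hist \<Rightarrow> real) \<Rightarrow> ('i, 'a) strat set" where
  "MM G R i u = {s \<in> R i. \<forall>I. reaches_info G i s I \<and> own_at G R i I \<noteq> {} \<and> others_at G R i I \<noteq> {}
       \<longrightarrow> \<not> strictly_dom_mixed G i u (own_at G R i I) (others_at G R i I) s}"

end

theory Submission
  imports Defs
begin

text \<open>Fix a utility representation u. Weak dominance between pure strategies is then the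
same in utilities as in the ordinal game, and a strategy that is weakly dominated on every
nonempty set of opponent profiles is strictly dominated by a mixture: take a strategy that
weakly dominates on all profiles, dominate the profiles where it is not strictly better by
induction, and mix the inductive mixture in with a small weight. So every M_i(R)[u] lies in
U_i(R).

Conversely, let u = -(1/M) ^ rank, where rank counts the outcomes weakly below and M is at
least the number of opponent profiles. If s is not B-dominated, some set Q of profiles admits
no strategy weakly dominating s. Weighting q in Q by M ^ rank(s, q), every pure strategy
gains at most 0 in total over s (a single strict loss costs at least M - 1, each gain is
at most 1), so no mixture strictly dominates s. This one u witnesses U_i(R) \<subseteq> M_i(R)[u].\<close>

section \<open>Dominance in payoff matrices\<close>

definition weakly_dominates :: "('s \<Rightarrow> 'q \<Rightarrow> real) \<Rightarrow> 'q set \<Rightarrow> 's \<Rightarrow> 's \<Rightarrow> bool" where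
  "weakly_dominates f Q s t \<longleftrightarrow> (\<forall>q\<in>Q. f s q \<le> f t q) \<and> (\<exists>q\<in>Q. f s q < f t q)"

definition B_dominated :: "('s \<Rightarrow> 'q \<Rightarrow> real) \<Rightarrow> 's set \<Rightarrow> 'q set \<Rightarrow> 's \<Rightarrow> bool" where
  "B_dominated f Ps Po s \<longleftrightarrow> (\<forall>Q \<subseteq> Po. Q \<noteq> {} \<longrightarrow> (\<exists>t\<in>Ps. weakly_dominates f Q s t))"

definition mixed_dominated :: "('s \<Rightarrow> 'q \<Rightarrow> real) \<Rightarrow> 's set \<Rightarrow> 'q set \<Rightarrow> 's \<Rightarrow> bool" where
  "mixed_dominated f Ps Po s \<longleftrightarrow> (\<exists>\<sigma>. (\<forall>t\<in>Ps. 0 \<le> \<sigma> t) \<and> sum \<sigma> Ps = 1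
     \<and> (\<forall>q\<in>Po. f s q < (\<Sum>t\<in>Ps. \<sigma> t * f t q)))"

lemma B_dominated_subset:
  "B_dominated f Ps Po s \<Longrightarrow> Q \<subseteq> Po \<Longrightarrow> B_dominated f Ps Q s"
  by (auto simp: B_dominated_def)

lemma mixed_dominated_subset:
  "mixed_dominated f Ps Po s \<Longrightarrow> Q \<subseteq> Po \<Longrightarrow> mixed_dominated f Ps Q s"
  unfolding mixed_dominated_def by blast

lemma small_mixture_above:
  fixes a b c :: "'q \<Rightarrow> real"
  assumes "finite A" "\<forall>q\<in>A. c q < a q"
  shows "\<exists>e. 0 < e \<and> e < 1 \<and> (\<forall>q\<in>A. c q < (1 - e) * a q + e * b q)"
proof -
  have "\<forall>q\<in>A. eventually (\<lambda>e. c q < (1 - e) * a q + e * b q) (at_right (0::real))"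
  proof
    fix q assume "q \<in> A"
    have "((\<lambda>e. (1 - e) * a q + e * b q) \<longlongrightarrow> a q) (at_right (0::real))"
      by (auto intro!: tendsto_eq_intros)
    then show "eventually (\<lambda>e. c q < (1 - e) * a q + e * b q) (at_right 0)"
      using assms(2) \<open>q \<in> A\<close> order_tendstoD(1) by blast
  qed
  then have "eventually (\<lambda>e. \<forall>q\<in>A. c q < (1 - e) * a q + e * b q) (at_right (0::real))"
    by (rule eventually_ball_finite[OF assms(1)])
  moreover have "eventually (\<lambda>e. e \<in> {0<..<1}) (at_right (0::real))"
    by (rule eventually_at_right_real) simp
  ultimately have "eventually (\<lambda>e. e \<in> {0<..<1} \<and> (\<forall>q\<in>A. c q < (1 - e) * a q + e * b q)) (at_right 0)"
    by (simp add: eventually_conj_iff)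
  then show ?thesis using eventually_happens[of _ "at_right (0::real)"] by auto
qed

lemma sum_point_mixture:
  fixes \<sigma> g :: "'s \<Rightarrow> real"
  assumes "finite Ps" "t0 \<in> Ps"
  shows "(\<Sum>t\<in>Ps. ((1 - e) * of_bool (t = t0) + e * \<sigma> t) * g t) = (1 - e) * g t0 + e * (\<Sum>t\<in>Ps. \<sigma> t * g t)"
proof -
  have "(\<Sum>t\<in>Ps. ((1 - e) * of_bool (t = t0) + e * \<sigma> t) * g t)
      = (1 - e) * (\<Sum>t\<in>Ps. of_bool (t = t0) * g t) + e * (\<Sum>t\<in>Ps. \<sigma> t * g t)"
    by (simp add: sum.distrib sum_distrib_left ring_distribs mult.assoc)
  also have "(\<Sum>t\<in>Ps. of_bool (t = t0) * g t) = (\<Sum>t\<in>Ps. if t = t0 then g t else 0)"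
    by (intro sum.cong) auto
  also have "\<dots> = g t0"
    using assms by (simp add: sum.delta)
  finally show ?thesis .
qed

lemma B_dominated_imp_mixed_dominated:
  assumes fPs: "finite Ps" and sPs: "s \<in> Ps" and fPo: "finite Po" and B: "B_dominated f Ps Po s"
  shows "mixed_dominated f Ps Po s"
  using fPo B
proof (induction Po rule: finite_psubset_induct)
  case (psubset Po)
  show ?case
  proof (cases "Po = {}")
    case True
    show ?thesis unfolding mixed_dominated_def
      by (rule exI[of _ "\<lambda>t. of_bool (t = s)"]) (simp add: fPs sPs True)
  next
    case False
    then obtain t0 where t0: "t0 \<in> Ps" "weakly_dominates f Po s t0"
      using psubset.prems by (auto simp: B_dominated_def)
    define A where "A = {q\<in>Po. f s q < f t0 q}"
    have "Po - A \<subset> Po" using t0(2) by (auto simp: A_def weakly_dominates_def)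
    then have "mixed_dominated f Ps (Po - A) s"
      using psubset.IH B_dominated_subset[OF psubset.prems Diff_subset] by blast
    then obtain \<sigma>' where \<sigma>': "\<forall>t\<in>Ps. 0 \<le> \<sigma>' t" "sum \<sigma>' Ps = 1"
        "\<forall>q\<in>Po - A. f s q < (\<Sum>t\<in>Ps. \<sigma>' t * f t q)"
      unfolding mixed_dominated_def by blast
    have "finite A" "\<forall>q\<in>A. f s q < f t0 q" using psubset.hyps by (auto simp: A_def)
    then obtain e where e: "0 < e" "e < 1" "\<forall>q\<in>A. f s q < (1 - e) * f t0 q + e * (\<Sum>t\<in>Ps. \<sigma>' t * f t q)"
      using small_mixture_above[where a = "\<lambda>q. f t0 q" and b = "\<lambda>q. \<Sum>t\<in>Ps. \<sigma>' t * f t q"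
          and c = "\<lambda>q. f s q"] by blast
    define \<sigma> where "\<sigma> t = (1 - e) * of_bool (t = t0) + e * \<sigma>' t" for t
    have mixture: "(\<Sum>t\<in>Ps. \<sigma> t * f t q) = (1 - e) * f t0 q + e * (\<Sum>t\<in>Ps. \<sigma>' t * f t q)" for q
      unfolding \<sigma>_def using sum_point_mixture[OF fPs t0(1)] .
    have "f s q < (\<Sum>t\<in>Ps. \<sigma> t * f t q)" if "q \<in> Po" for q
    proof (cases "q \<in> A")
      case False
      then have "f t0 q = f s q" using that t0(2) by (force simp: A_def weakly_dominates_def)
      then show ?thesis using that False \<sigma>'(3) e(1) by (simp add: mixture algebra_simps)
    qed (use e(3) mixture in simp)
    moreover have "sum \<sigma> Ps = 1"
      using sum_point_mixture[OF fPs t0(1), of e \<sigma>' "\<lambda>_. 1"] \<sigma>'(2) by (simp add: \<sigma>_def)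
    moreover have "\<forall>t\<in>Ps. 0 \<le> \<sigma> t" using \<sigma>'(1) e by (simp add: \<sigma>_def)
    ultimately show ?thesis unfolding mixed_dominated_def by blast
  qed
qed

lemma rank_gain_bounds:
  fixes M :: real
  assumes "1 < M"
  shows "M ^ b * ((1/M) ^ b - (1/M) ^ a) \<le> 1"
    and "a \<le> b \<Longrightarrow> M ^ b * ((1/M) ^ b - (1/M) ^ a) \<le> 0"
    and "a < b \<Longrightarrow> M ^ b * ((1/M) ^ b - (1/M) ^ a) \<le> 1 - M"
proof -
  have gain: "M ^ b * ((1/M) ^ b - (1/M) ^ a) = 1 - M ^ b / M ^ a"
    using assms by (simp add: power_one_over field_simps)
  show "M ^ b * ((1/M) ^ b - (1/M) ^ a) \<le> 1"
    using assms by (simp add: gain)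
  show "M ^ b * ((1/M) ^ b - (1/M) ^ a) \<le> 0" if "a \<le> b"
    using power_increasing[OF that, of M] assms by (simp add: gain)
  show "M ^ b * ((1/M) ^ b - (1/M) ^ a) \<le> 1 - M" if "a < b"
  proof -
    have "M * M ^ a \<le> M ^ b"
      using power_increasing[of "Suc a" b M] that assms by simp
    then show ?thesis using assms by (simp add: gain field_simps)
  qed
qed

lemma rank_weighted_gain_nonpos:
  fixes r :: "'s \<Rightarrow> 'q \<Rightarrow> nat" and M :: real
  assumes "finite Q" "1 < M" "real (card Q) \<le> M"
    and "\<not> weakly_dominates (\<lambda>t q. - ((1/M) ^ r t q)) Q s t"
  shows "(\<Sum>q\<in>Q. M ^ r s q * ((1/M) ^ r s q - (1/M) ^ r t q)) \<le> 0"
proof -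
  have less_iff: "(1/M) ^ m < (1/M) ^ n \<longleftrightarrow> n < m" for m n
    using assms(2) by (intro power_strict_decreasing_iff) auto
  have le_iff: "(1/M) ^ m \<le> (1/M) ^ n \<longleftrightarrow> n \<le> m" for m n
    using assms(2) by (intro power_decreasing_iff) auto
  have "(\<exists>q\<in>Q. (1/M) ^ r s q < (1/M) ^ r t q) \<or> (\<forall>q\<in>Q. (1/M) ^ r s q \<le> (1/M) ^ r t q)"
    using assms(4) unfolding weakly_dominates_def by (auto simp: not_le)
  then consider (worse) q0 where "q0 \<in> Q" "r t q0 < r s q0" | (no_better) "\<forall>q\<in>Q. r t q \<le> r s q"
    unfolding less_iff le_iff by blast
  then show ?thesis
  proof cases
    case worse
    have "(\<Sum>q\<in>Q. M ^ r s q * ((1/M) ^ r s q - (1/M) ^ r t q))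
        = M ^ r s q0 * ((1/M) ^ r s q0 - (1/M) ^ r t q0)
          + (\<Sum>q\<in>Q - {q0}. M ^ r s q * ((1/M) ^ r s q - (1/M) ^ r t q))"
      using assms(1) worse(1) by (simp add: sum.remove)
    also have "\<dots> \<le> (1 - M) + (\<Sum>q\<in>Q - {q0}. 1)"
      using rank_gain_bounds[OF assms(2)] worse(2) by (intro add_mono sum_mono) auto
    also have "\<dots> = 1 - M + (real (card Q) - 1)"
    proof -
      have "0 < card Q" using assms(1) worse(1) by (auto simp: card_gt_0_iff)
      then show ?thesis using assms(1) worse(1) by (simp add: card_Diff_singleton of_nat_diff)
    qed
    finally show ?thesis using assms(3) by simp
  next
    case no_better
    then show ?thesis using rank_gain_bounds(2)[OF assms(2)] by (intro sum_nonpos) auto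
  qed
qed

lemma rank_payoff_mixed_dominated_imp_B_dominated:
  fixes r :: "'s \<Rightarrow> 'q \<Rightarrow> nat" and M :: real
  defines "f \<equiv> \<lambda>t q. - ((1/M) ^ r t q)"
  assumes "finite Ps" "finite Po" "1 < M" "real (card Po) \<le> M"
    and "mixed_dominated f Ps Po s"
  shows "B_dominated f Ps Po s"
  unfolding B_dominated_def
proof (intro allI impI)
  fix Q assume Q: "Q \<subseteq> Po" "Q \<noteq> {}"
  show "\<exists>t\<in>Ps. weakly_dominates f Q s t"
  proof (rule ccontr)
    assume none: "\<not> (\<exists>t\<in>Ps. weakly_dominates f Q s t)"
    define w where "w q = M ^ r s q" for q
    have fQ: "finite Q" and cQ: "real (card Q) \<le> M"
      using Q(1) assms(3,5) card_mono[OF assms(3) Q(1)] finite_subset by force+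
    obtain \<sigma> where \<sigma>: "\<forall>t\<in>Ps. 0 \<le> \<sigma> t" "sum \<sigma> Ps = 1" "\<forall>q\<in>Q. f s q < (\<Sum>t\<in>Ps. \<sigma> t * f t q)"
      using mixed_dominated_subset[OF assms(6) Q(1)] unfolding mixed_dominated_def by blast
    have "0 < (\<Sum>q\<in>Q. w q * ((\<Sum>t\<in>Ps. \<sigma> t * f t q) - f s q))"
      using \<sigma>(3) assms(4) by (intro sum_pos[OF fQ Q(2)]) (simp add: w_def)
    also have "\<dots> = (\<Sum>q\<in>Q. \<Sum>t\<in>Ps. \<sigma> t * (w q * (f t q - f s q)))"
    proof (rule sum.cong[OF refl])
      fix q
      have "(\<Sum>t\<in>Ps. \<sigma> t * (w q * (f t q - f s q)))
          = w q * (\<Sum>t\<in>Ps. \<sigma> t * f t q) - w q * f s q * sum \<sigma> Ps"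
        by (simp add: sum_subtractf sum_distrib_left sum_distrib_right algebra_simps)
      then show "w q * ((\<Sum>t\<in>Ps. \<sigma> t * f t q) - f s q) = (\<Sum>t\<in>Ps. \<sigma> t * (w q * (f t q - f s q)))"
        using \<sigma>(2) by (simp add: algebra_simps)
    qed
    also have "\<dots> = (\<Sum>t\<in>Ps. \<sigma> t * (\<Sum>q\<in>Q. w q * (f t q - f s q)))"
      by (simp add: sum_distrib_left sum.swap[of _ Q])
    also have "\<dots> \<le> 0"
    proof (rule sum_nonpos, rule mult_nonneg_nonpos)
      fix t assume "t \<in> Ps"
      then show "0 \<le> \<sigma> t" using \<sigma>(1) by blast
      have "\<not> weakly_dominates f Q s t" using none \<open>t \<in> Ps\<close> by blast
      from rank_weighted_gain_nonpos[OF fQ assms(4) cQ this[unfolded f_def]]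
      show "(\<Sum>q\<in>Q. w q * (f t q - f s q)) \<le> 0"
        by (simp add: f_def w_def)
    qed
    finally show False by simp
  qed
qed

section \<open>Plays and outcomes\<close>

lemma finite_succs: "finite (hists G) \<Longrightarrow> finite (succs G h)"
proof -
  assume "finite (hists G)"
  moreover have "succs G h = (\<lambda>a. h @ [a]) -` hists G" by (auto simp: succs_def)
  ultimately show ?thesis by (simp add: finite_vimageI inj_def)
qed

lemma finite_avail: "finite (hists G) \<Longrightarrow> finite (avail G h j)"
  by (simp add: avail_def finite_succs)

lemma info_of_active:
  assumes "infos_ok G" "active G j h"
  shows "info_of G j h \<in> infos G j" "h \<in> info_of G j h"
proof -
  have disj: "\<forall>I\<in>infos G j. \<forall>J\<in>infos G j. I \<noteq> J \<longrightarrow> I \<inter> J = {}"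
    and "h \<in> \<Union> (infos G j)"
    using assms unfolding infos_ok_def by auto
  then obtain I where I: "I \<in> infos G j" "h \<in> I" by blast
  with disj have "info_of G j h = I"
    unfolding info_of_def by (intro the_equality) blast+
  with I show "info_of G j h \<in> infos G j" "h \<in> info_of G j h" by simp_all
qed

lemma inactive_avail_eq:
  assumes "tree_ok G" "h \<in> hists G" "h \<notin> terminals G" "\<not> active G j h"
    and "x \<in> avail G h j" "y \<in> avail G h j"
  shows "x = y"
proof -
  have "finite (avail G h j)" using assms(1) by (simp add: finite_avail tree_ok_def)
  moreover have "card (avail G h j) \<le> 1" using assms(2-4) by (simp add: active_def)
  ultimately show ?thesis using assms(5,6) card_le_Suc0_iff_eq by auto
qed

lemma prefix_in_hists: "tree_ok G \<Longrightarrow> h @ h' \<in> hists G \<Longrightarrow> h \<in> hists G"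
  by (auto simp: tree_ok_def)

lemma take_in_hists: "tree_ok G \<Longrightarrow> h \<in> hists G \<Longrightarrow> take k h \<in> hists G"
  using prefix_in_hists[of G "take k h" "drop k h"] by simp

lemma terminal_no_extension:
  assumes "tree_ok G" "z \<in> terminals G" "z @ w \<in> hists G"
  shows "w = []"
proof (rule ccontr)
  assume "w \<noteq> []"
  then have "z @ [hd w] \<in> hists G"
    using prefix_in_hists[OF assms(1), of "z @ [hd w]" "tl w"] assms(3) by simp
  then show False using assms(2) by (auto simp: terminals_def succs_def)
qed

lemma consistent_snoc:
  "consistent G j f (h @ [a]) \<longleftrightarrow>
     consistent G j f h \<and> (active G j h \<longrightarrow> f (info_of G j h) = Some (a j))"
  by (auto simp: consistent_def nth_append less_Suc_eq)

lemma consistent_nth: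
  "consistent G j f h \<Longrightarrow> k < length h \<Longrightarrow> active G j (take k h)
    \<Longrightarrow> f (info_of G j (take k h)) = Some ((h ! k) j)"
  by (simp add: consistent_def)

lemma consistent_reduce:
  "consistent G j (reduce G j s) h \<Longrightarrow> consistent G j (Some \<circ> s) h"
  unfolding consistent_def reduce_def by (auto split: if_splits)

lemma consistent_extension:
  assumes tr: "tree_ok G" and io: "infos_ok G" and p: "\<forall>j. p j \<in> strats G j"
    and h: "h \<in> hists G" "h \<notin> terminals G" "\<forall>j. consistent G j (p j) h"
  shows "\<exists>a. h @ [a] \<in> hists G \<and> (\<forall>j. consistent G j (p j) (h @ [a]))"
proof -
  have "\<forall>j. \<exists>s \<in> std_strats G j. p j = reduce G j s"
    using p by (auto simp: strats_def)
  then obtain s where s: "\<And>j. s j \<in> std_strats G j" "\<And>j. p j = reduce G j (s j)"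
    by metis
  have ne: "succs G h \<noteq> {}" using h by (simp add: terminals_def)
  define a where "a j = (if active G j h then s j (info_of G j h) else SOME x. x \<in> avail G h j)" for j
  have "a j \<in> avail G h j" for j
  proof (cases "active G j h")
    case True
    then show ?thesis
      using s(1)[of j] info_of_active[OF io True] by (auto simp: a_def std_strats_def)
  next
    case False
    have "avail G h j \<noteq> {}" using ne by (simp add: avail_def)
    then show ?thesis using False by (simp add: a_def some_in_eq)
  qed
  then have "h @ [a] \<in> hists G"
    using tr h(1) ne unfolding tree_ok_def succs_def by blast
  moreover have "consistent G j (p j) (h @ [a])" for j
  proof (cases "active G j h")
    case True
    have "consistent G j (Some \<circ> s j) h"
      using h(3) consistent_reduce[of G j "s j" h] by (simp add: s(2))
    then have "allows G j (s j) (info_of G j h)"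
      using info_of_active[OF io True] by (auto simp: allows_def)
    then show ?thesis
      using h(3) True info_of_active[OF io True] by (simp add: consistent_snoc s(2) reduce_def a_def)
  qed (use h(3) in \<open>simp add: consistent_snoc\<close>)
  ultimately show ?thesis by blast
qed

lemma consistent_terminal_exists:
  assumes tr: "tree_ok G" and io: "infos_ok G" and p: "\<forall>j. p j \<in> strats G j"
  shows "\<exists>z \<in> terminals G. \<forall>j. consistent G j (p j) z"
proof -
  define C where "C = {h \<in> hists G. \<forall>j. consistent G j (p j) h}"
  have "finite C" "[] \<in> C"
    using tr by (auto simp: C_def tree_ok_def consistent_def)
  then have "Max (length ` C) \<in> length ` C" by (intro Max_in) auto
  then obtain h where h: "h \<in> C" "length h = Max (length ` C)" by auto
  have longest: "length h' \<le> length h" if "h' \<in> C" for h'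
    using Max_ge[of "length ` C"] \<open>finite C\<close> that h(2) by simp
  have "h \<in> terminals G"
  proof (rule ccontr)
    assume "h \<notin> terminals G"
    then obtain a where "h @ [a] \<in> C"
      using consistent_extension[OF tr io p _ \<open>h \<notin> terminals G\<close>] h unfolding C_def by blast
    then show False using longest[of "h @ [a]"] by simp
  qed
  with h show ?thesis by (auto simp: C_def)
qed

lemma consistent_histories_agree:
  assumes tr: "tree_ok G"
    and z1: "z1 \<in> hists G" "\<forall>j. consistent G j (p j) z1"
    and z2: "z2 \<in> hists G" "\<forall>j. consistent G j (p j) z2"
  shows "k \<le> min (length z1) (length z2) \<Longrightarrow> take k z1 = take k z2"
proof (induction k)
  case (Suc k)
  then have k: "k < length z1" "k < length z2" and IH: "take k z1 = take k z2" by auto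
  define h where "h = take k z1"
  have succ: "z1 ! k \<in> succs G h" "z2 ! k \<in> succs G h"
    using take_in_hists[OF tr z1(1), of "Suc k"] take_in_hists[OF tr z2(1), of "Suc k"] k IH
    by (simp_all add: succs_def h_def take_Suc_conv_app_nth)
  then have h: "h \<in> hists G" "h \<notin> terminals G"
    using take_in_hists[OF tr z1(1)] by (auto simp: h_def terminals_def)
  have "(z1 ! k) j = (z2 ! k) j" for j
  proof (cases "active G j h")
    case True
    then show ?thesis
      using consistent_nth[of G j "p j" z1 k] consistent_nth[of G j "p j" z2 k] z1(2) z2(2) k IH
      by (simp add: h_def)
  next
    case False
    moreover have "(z1 ! k) j \<in> avail G h j" "(z2 ! k) j \<in> avail G h j"
      using succ by (auto simp: avail_def)
    ultimately show ?thesis using inactive_avail_eq[OF tr h] by blast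
  qed
  then have "z1 ! k = z2 ! k" by (rule ext)
  then show ?case using IH k by (simp add: take_Suc_conv_app_nth)
qed simp

lemma consistent_terminal_unique:
  assumes tr: "tree_ok G"
    and z1: "z1 \<in> terminals G" "\<forall>j. consistent G j (p j) z1"
    and z2: "z2 \<in> terminals G" "\<forall>j. consistent G j (p j) z2"
  shows "z1 = z2"
proof -
  have shorter_eq: "za = zb"
    if "length za \<le> length zb" "za \<in> terminals G" "zb \<in> terminals G"
       "\<forall>j. consistent G j (p j) za" "\<forall>j. consistent G j (p j) zb" for za zb
  proof -
    have "take (length za) zb = za"
      using consistent_histories_agree[OF tr, of za p zb "length za"] that
      by (simp add: terminals_def)
    then have zb: "za @ drop (length za) zb = zb"
      by (metis append_take_drop_id)
    moreover have "zb \<in> hists G" using that(3) by (simp add: terminals_def)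
    ultimately have "drop (length za) zb = []"
      using terminal_no_extension[OF tr that(2), of "drop (length za) zb"] by argo
    then show ?thesis using zb by simp
  qed
  show ?thesis
    using shorter_eq[OF _ z1(1) z2(1) z1(2) z2(2)] shorter_eq[OF _ z2(1) z1(1) z2(2) z1(2)]
    by (metis nat_le_linear)
qed

lemma outcome_in_terminals:
  assumes tr: "tree_ok G" and io: "infos_ok G" and p: "\<forall>j. p j \<in> strats G j"
  shows "outcome G p \<in> terminals G"
proof -
  obtain z where z: "z \<in> terminals G" "\<forall>j. consistent G j (p j) z"
    using consistent_terminal_exists[OF tr io p] by blast
  have "outcome G p = z"
    unfolding outcome_def using z consistent_terminal_unique[OF tr _ _ z]
    by (intro the_equality) blast+
  with z show ?thesis by simp
qed

lemma finite_terminals: "tree_ok G \<Longrightarrow> finite (terminals G)"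
  by (auto simp: tree_ok_def terminals_def)

lemma finite_strats:
  assumes tr: "tree_ok G" and io: "infos_ok G" shows "finite (strats G j)"
proof -
  have fh: "finite (hists G)" using tr by (simp add: tree_ok_def)
  have infos_hists: "\<Union> (infos G j) \<subseteq> hists G" using io by (auto simp: infos_ok_def active_def)
  then have "infos G j \<subseteq> Pow (hists G)" by blast
  then have fi: "finite (infos G j)" using fh by (meson finite_Pow_iff finite_subset)
  define A where "A = (\<Union>h\<in>hists G. avail G h j)"
  have fA: "finite A" unfolding A_def using fh finite_avail[OF fh] by blast
  define F where "F = {f. \<forall>I. (I \<in> infos G j \<longrightarrow> f I \<in> insert None (Some ` A)) \<and> (I \<notin> infos G j \<longrightarrow> f I = None)}"
  have "strats G j \<subseteq> F"
  proof
    fix f assume "f \<in> strats G j"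
    then obtain s where s: "s \<in> std_strats G j" "f = reduce G j s" by (auto simp: strats_def)
    have "s I \<in> A" if "I \<in> infos G j" for I
    proof -
      have "I \<noteq> {}" using io that by (simp add: infos_ok_def)
      then obtain h where "h \<in> I" by blast
      moreover have "h \<in> hists G" using \<open>h \<in> I\<close> that infos_hists by blast
      ultimately show ?thesis using s(1) that unfolding std_strats_def A_def by blast
    qed
    then show "f \<in> F" using s(2) by (auto simp: reduce_def F_def)
  qed
  moreover have "finite F"
    unfolding F_def using fi fA by (intro finite_set_of_finite_funs) auto
  ultimately show ?thesis using finite_subset by blast
qed

lemma join_in_strats:
  assumes "restriction G R" "t \<in> R i" "so \<in> others i R"
  shows "\<forall>j. join i t so j \<in> strats G j"
  using assms by (auto simp: join_def restriction_def others_def PiE_iff)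

lemma outcome_join_in_terminals:
  assumes "finite_game G" "restriction G R" "t \<in> R i" "so \<in> others i R"
  shows "outcome G (join i t so) \<in> terminals G"
  using assms(1) outcome_in_terminals[OF _ _ join_in_strats[OF assms(2-4)]]
  by (simp add: finite_game_def)

lemma finite_restriction:
  assumes "finite_game G" "restriction G R" shows "finite (R j)"
proof -
  have "finite (strats G j)" using assms(1) by (intro finite_strats) (simp_all add: finite_game_def)
  moreover have "R j \<subseteq> strats G j" using assms(2) by (simp add: restriction_def)
  ultimately show ?thesis by (rule finite_subset[rotated])
qed

lemma finite_others:
  assumes "finite_game G" "restriction G R" shows "finite (others i R)"
  unfolding others_def using finite_restriction[OF assms] by (intro finite_PiE) auto

lemma own_at_subset: "own_at G R i I \<subseteq> R i"
  by (auto simp: own_at_def)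

lemma others_at_subset: "others_at G R i I \<subseteq> others i R"
  by (auto simp: others_at_def)

lemma finite_own_at:
  assumes "finite_game G" "restriction G R" shows "finite (own_at G R i I)"
  using finite_restriction[OF assms] own_at_subset by (rule finite_subset[rotated])

lemma finite_others_at:
  assumes "finite_game G" "restriction G R" shows "finite (others_at G R i I)"
  using finite_others[OF assms] others_at_subset by (meson finite_subset)

section \<open>Utility representations and dominance\<close>

definition pref_rank :: "('z \<Rightarrow> 'z \<Rightarrow> bool) \<Rightarrow> 'z set \<Rightarrow> 'z \<Rightarrow> nat" where
  "pref_rank P Z z = card {y \<in> Z. P z y}"

lemma pref_rank_le_iff:
  assumes "finite Z"
    and total: "\<forall>a\<in>Z. \<forall>b\<in>Z. P a b \<or> P b a"
    and trans: "\<forall>a\<in>Z. \<forall>b\<in>Z. \<forall>c\<in>Z. P a b \<longrightarrow> P b c \<longrightarrow> P a c"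
    and z: "z \<in> Z" "z' \<in> Z"
  shows "pref_rank P Z z' \<le> pref_rank P Z z \<longleftrightarrow> P z z'"
proof
  assume le: "pref_rank P Z z' \<le> pref_rank P Z z"
  show "P z z'"
  proof (rule ccontr)
    assume np: "\<not> P z z'"
    then have "P z' z" using total z by blast
    then have "{y \<in> Z. P z y} \<subseteq> {y \<in> Z. P z' y}" using trans z by blast
    moreover have "z' \<in> {y \<in> Z. P z' y} - {y \<in> Z. P z y}" using total z np by blast
    ultimately have "{y \<in> Z. P z y} \<subset> {y \<in> Z. P z' y}" by blast
    then have "pref_rank P Z z < pref_rank P Z z'"
      unfolding pref_rank_def using assms(1) by (intro psubset_card_mono) auto
    then show False using le by simp
  qed
next
  assume "P z z'"
  then have "{y \<in> Z. P z' y} \<subseteq> {y \<in> Z. P z y}" using trans z by blast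
  then show "pref_rank P Z z' \<le> pref_rank P Z z"
    unfolding pref_rank_def using assms(1) by (intro card_mono) auto
qed

definition rank_utility :: "('i, 'a, 'b) game_scheme \<Rightarrow> 'i \<Rightarrow> real \<Rightarrow> ('i, 'a) hist \<Rightarrow> real" where
  "rank_utility G i M z = - ((1/M) ^ pref_rank (pref G i) (terminals G) z)"

lemma rank_utility_in_util_reps:
  assumes "finite_game G" "1 < M"
  shows "rank_utility G i M \<in> util_reps G i"
  unfolding util_reps_def
proof (intro CollectI ballI)
  fix z z' assume z: "z \<in> terminals G" "z' \<in> terminals G"
  have fin: "finite (terminals G)" and po: "prefs_ok G"
    using assms(1) finite_terminals by (auto simp: finite_game_def)
  have po_i: "(\<forall>a\<in>terminals G. \<forall>b\<in>terminals G. pref G i a b \<or> pref G i b a)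
    \<and> (\<forall>a\<in>terminals G. \<forall>b\<in>terminals G. \<forall>c\<in>terminals G. pref G i a b \<longrightarrow> pref G i b c \<longrightarrow> pref G i a c)"
    using po unfolding prefs_ok_def by (rule spec)
  have "rank_utility G i M z' \<le> rank_utility G i M z
      \<longleftrightarrow> pref_rank (pref G i) (terminals G) z' \<le> pref_rank (pref G i) (terminals G) z"
    unfolding rank_utility_def using assms(2) by (simp add: power_decreasing_iff)
  also have "\<dots> \<longleftrightarrow> pref G i z z'"
    using pref_rank_le_iff[OF fin conjunct1[OF po_i] conjunct2[OF po_i] z] .
  finally show "rank_utility G i M z' \<le> rank_utility G i M z \<longleftrightarrow> pref G i z z'" .
qed

definition payoff :: "('i, 'a, 'b) game_scheme \<Rightarrow> 'i \<Rightarrow> (('i, 'a) hist \<Rightarrow> real)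
    \<Rightarrow> ('i, 'a) strat \<Rightarrow> ('i \<Rightarrow> ('i, 'a) strat) \<Rightarrow> real" where
  "payoff G i u t so = u (outcome G (join i t so))"

lemma strictly_dom_mixed_iff_mixed_dominated:
  "strictly_dom_mixed G i u Ps Po s \<longleftrightarrow> mixed_dominated (payoff G i u) Ps Po s"
  by (simp add: strictly_dom_mixed_def mixed_dominated_def payoff_def)

lemma B_dom_iff_B_dominated:
  assumes fg: "finite_game G" and rs: "restriction G R" and u: "u \<in> util_reps G i"
    and Ps: "Ps \<subseteq> R i" and Po: "Po \<subseteq> others i R"
  shows "B_dom G i Ps Po s \<longleftrightarrow> s \<in> Ps \<and> B_dominated (payoff G i u) Ps Po s"
proof -
  have pref_iff: "pref G i (outcome G (join i t q)) (outcome G (join i s q))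
      \<longleftrightarrow> payoff G i u s q \<le> payoff G i u t q"
    if "t \<in> Ps" "s \<in> Ps" "q \<in> Po" for t s q
    using u outcome_join_in_terminals[OF fg rs] Ps Po that
    unfolding util_reps_def payoff_def by blast
  have "weakly_dom G i Ps Q s t \<longleftrightarrow> weakly_dominates (payoff G i u) Q s t"
    if "Q \<subseteq> Po" "s \<in> Ps" "t \<in> Ps" for Q t
    using that pref_iff[of t s] pref_iff[of s t]
    unfolding weakly_dom_def weakly_dominates_def spref_def by (auto simp: not_le subset_iff)
  then show ?thesis
    unfolding B_dom_def B_dominated_def by blast
qed

lemma B_dom_imp_strictly_dom_mixed:
  assumes fg: "finite_game G" and rs: "restriction G R" and u: "u \<in> util_reps G i"
    and "B_dom G i (own_at G R i I) (others_at G R i I) s"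
  shows "strictly_dom_mixed G i u (own_at G R i I) (others_at G R i I) s"
  using assms(4) B_dom_iff_B_dominated[OF fg rs u own_at_subset[of G R i I] others_at_subset[of G R i I]]
    B_dominated_imp_mixed_dominated[OF finite_own_at[OF fg rs] _ finite_others_at[OF fg rs]]
  by (simp add: strictly_dom_mixed_iff_mixed_dominated)

lemma strictly_dom_mixed_rank_utility_imp_B_dom:
  assumes fg: "finite_game G" and rs: "restriction G R" and s: "s \<in> own_at G R i I"
    and M: "1 < M" "real (card (others i R)) \<le> M"
    and dom: "strictly_dom_mixed G i (rank_utility G i M) (own_at G R i I) (others_at G R i I) s"
  shows "B_dom G i (own_at G R i I) (others_at G R i I) s"
proof -
  define r where "r t q = pref_rank (pref G i) (terminals G) (outcome G (join i t q))" for t q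
  have payoff_eq: "payoff G i (rank_utility G i M) = (\<lambda>t q. - ((1/M) ^ r t q))"
    by (simp add: fun_eq_iff payoff_def rank_utility_def r_def)
  have "real (card (others_at G R i I)) \<le> M"
    using card_mono[OF finite_others[OF fg rs] others_at_subset[of G R i I]] M(2) by simp
  then have "B_dominated (payoff G i (rank_utility G i M)) (own_at G R i I) (others_at G R i I) s"
    using rank_payoff_mixed_dominated_imp_B_dominated[OF finite_own_at[OF fg rs] finite_others_at[OF fg rs]]
      dom M unfolding strictly_dom_mixed_iff_mixed_dominated payoff_eq by simp
  then show ?thesis
    using B_dom_iff_B_dominated[OF fg rs rank_utility_in_util_reps[OF fg M(1)]
        own_at_subset[of G R i I] others_at_subset[of G R i I]] s
    by simp
qed

lemma MM_subset_UU:
  assumes "finite_game G" "restriction G R" "u \<in> util_reps G i"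
  shows "MM G R i u \<subseteq> UU G R i"
  using B_dom_imp_strictly_dom_mixed[OF assms]
  unfolding MM_def UU_def cond_B_dom_def by blast

lemma UU_subset_MM_rank_utility:
  assumes "finite_game G" "restriction G R"
  shows "UU G R i \<subseteq> MM G R i (rank_utility G i (real (card (others i R)) + 2))"
proof
  fix s assume "s \<in> UU G R i"
  then have s: "s \<in> R i" "\<not> cond_B_dom G R i s" by (auto simp: UU_def)
  show "s \<in> MM G R i (rank_utility G i (real (card (others i R)) + 2))"
    unfolding MM_def
  proof (intro CollectI conjI allI impI s(1) notI)
    fix I assume I: "reaches_info G i s I \<and> own_at G R i I \<noteq> {} \<and> others_at G R i I \<noteq> {}"
      and dom: "strictly_dom_mixed G i (rank_utility G i (real (card (others i R)) + 2))
        (own_at G R i I) (others_at G R i I) s"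
    have "s \<in> own_at G R i I"
      using I s(1) by (auto simp: reaches_info_def own_at_def)
    then have "B_dom G i (own_at G R i I) (others_at G R i I) s"
      using strictly_dom_mixed_rank_utility_imp_B_dom[OF assms _ _ _ dom] by simp
    with I s(2) show False unfolding cond_B_dom_def by blast
  qed
qed

theorem lemma5:
  fixes G :: "('i::finite, 'a) game" and R :: "'i \<Rightarrow> ('i, 'a) strat set" and i :: 'i
  assumes "finite_game G" and "restriction G R"
  shows "UU G R i = (\<Union>u \<in> util_reps G i. MM G R i u)"
proof
  let ?u = "rank_utility G i (real (card (others i R)) + 2)"
  have "?u \<in> util_reps G i" using rank_utility_in_util_reps[OF assms(1)] by simp
  then show "UU G R i \<subseteq> (\<Union>u \<in> util_reps G i. MM G R i u)"
    using UU_subset_MM_rank_utility[OF assms] by blast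
  show "(\<Union>u \<in> util_reps G i. MM G R i u) \<subseteq> UU G R i"
    using MM_subset_UU[OF assms] by blast
qed

end
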